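(* Let $(\mathbf k((G)),l)$ be a series field with prelogarithmic section, with associated EL-series field $(\mathbf k((G))^{EL},\mathrm{Log},\mathrm{Exp})$. Let $U\subseteq H\subseteq G$ be subgroups such that $U$ is a proper convex subgroup of $H$ ($U=\{1\}$ allowed). Suppose $(\dagger)$: $\mathrm{Log}(h)<|f|$ for all $h\in H$ and all $f\in\mathbf k((H^{>U}))$ with $f\ne0$. Let $H^{\#,U}=H\cdot\mathrm{Exp}(\mathbf k((H^{>U})))\subseteq G^\#$. Then $H$ is a proper convex subgroup of $H^{\#,U}$, $H^{\#,U}$ is the anti-lexicographic product of $H$ and $\mathrm{Exp}(\mathbf k((H^{>U})))$, and $\mathrm{Log}(h')<|f|$ for all $h'\in H^{\#,U}$ and all nonzero $f\in\mathbf k(((H^{\#,U})^{>H}))$.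
   Context: Let $\mathbf k$ be an ordered field and $(G,\cdot,<)$ a totally ordered abelian group (written multiplicatively). $\mathbf k((G))$ denotes the field of generalized power series $\alpha=\sum_{g\in G}\alpha(g)\,g$ ($\alpha(g)\in\mathbf k$) with anti-well-ordered support, usual operations, canonical valuation $v(\alpha)=\max\operatorname{supp}\alpha$ and ordering $\alpha>0$ iff $\alpha(v(\alpha))>0$; $\mathbf k$, $G$ are identified with subsets of $\mathbf k((G))$. For $S\subseteq G$, $\mathbf k((S))=\{\alpha:\operatorname{supp}\alpha\subseteq S\}$. For a subgroup $H$ and $A\subseteq G$, $H^{>A}=\{h\in H:h>a\ \forall a\in A\}$, $H^{>1}=\{h\in H:h>1\}$. Every $\alpha>0$ is uniquely $\alpha=g\,a(1+\varepsilon)$ with $g=v(\alpha)$, $a\in\mathbf k^{>0}$, $\varepsilon\in\mathbf k((G^{<1}))$. A prelogarithmic section is an order-preserving group embedding $l:(G,\cdot)\to(\mathbf k((G^{>1})),+)$. Fix an order-preserving group isomorphism $\log:(\mathbf k^{>0},\cdot)\to(\mathbf k,+)$. The prelogarithm of $l$ is $L(g\,a(1+\varepsilon))=l(g)+\log a+\sum_{i\ge1}(-1)^{i-1}\varepsilon^i/i$. Exponential extension: $G^\#$ is the ordered abelian group of formal symbols $e(\alpha)$, $\alpha\in\mathbf k((G^{>1}))$, with $e(\alpha)e(\beta)=e(\alpha+\beta)$, $e(\alpha)<e(\beta)\iff\alpha<\beta$, and $e(l(g))$ identified with $g\in G$; $l^\#(e(\alpha))=\alpha$ is a prelogarithmic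 section of $\mathbf k((G^\#))$ extending $l$. Iterating: $G^{\#n}$, $l^{\#n}$, prelogarithms $L^{\#n}$. The EL-series field is $\mathbf k((G))^{EL}=\bigcup_n\mathbf k((G^{\#n}))$ with $\mathrm{Log}=\bigcup_nL^{\#n}$, an order preserving isomorphism from the positive elements onto $(\mathbf k((G))^{EL},+)$; $\mathrm{Exp}=\mathrm{Log}^{-1}$. Note $\mathrm{Log}(g)=l(g)$ for $g\in G$, and $\mathrm{Exp}(f)\in G^\#$ for $f\in\mathbf k((G^{>1}))$. "Anti-lexicographic product" of subgroups $A,B$ of an ordered group: the group is $A\cdot B$, the product is direct, and $A$ is convex in it. *)

theory Defs
  imports Main "HOL-Library.Function_Algebras"
begin

definition supp :: "('i \<Rightarrow> 'k::zero) \<Rightarrow> 'i set" where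
  "supp f = {i. f i \<noteq> 0}"

definition anti_wo :: "('i \<Rightarrow> 'i \<Rightarrow> bool) \<Rightarrow> 'i set \<Rightarrow> bool" where
  "anti_wo lt S \<longleftrightarrow> (\<forall>T \<subseteq> S. T \<noteq> {} \<longrightarrow> (\<exists>m\<in>T. \<forall>x\<in>T. \<not> lt m x))"

definition ser :: "('i \<Rightarrow> 'i \<Rightarrow> bool) \<Rightarrow> 'i set \<Rightarrow> ('i \<Rightarrow> 'k::zero) set" where
  "ser lt S = {f. anti_wo lt (supp f) \<and> supp f \<subseteq> S}"

definition val :: "('i \<Rightarrow> 'i \<Rightarrow> bool) \<Rightarrow> ('i \<Rightarrow> 'k::zero) \<Rightarrow> 'i" where
  "val lt f = (THE m. m \<in> supp f \<and> (\<forall>x\<in>supp f. \<not> lt m x))"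

definition spos :: "('i \<Rightarrow> 'i \<Rightarrow> bool) \<Rightarrow> ('i \<Rightarrow> 'k::linordered_field) \<Rightarrow> bool" where
  "spos lt f \<longleftrightarrow> supp f \<noteq> {} \<and> 0 < f (val lt f)"

definition sless :: "('i \<Rightarrow> 'i \<Rightarrow> bool) \<Rightarrow> ('i \<Rightarrow> 'k::linordered_field) \<Rightarrow> ('i \<Rightarrow> 'k) \<Rightarrow> bool" where
  "sless lt f g \<longleftrightarrow> spos lt (g - f)"

definition sabs :: "('i \<Rightarrow> 'i \<Rightarrow> bool) \<Rightarrow> ('i \<Rightarrow> 'k::linordered_field) \<Rightarrow> ('i \<Rightarrow> 'k)" where
  "sabs lt f = (if spos lt (- f) then - f else f)"

definition add_subgroup :: "'a::ab_group_add set \<Rightarrow> bool" where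
  "add_subgroup S \<longleftrightarrow> 0 \<in> S \<and> (\<forall>x\<in>S. \<forall>y\<in>S. x + y \<in> S \<and> - x \<in> S)"

definition convex_in :: "('a \<Rightarrow> 'a \<Rightarrow> bool) \<Rightarrow> 'a set \<Rightarrow> 'a set \<Rightarrow> bool" where
  "convex_in lt A B \<longleftrightarrow> A \<subseteq> B \<and>
     (\<forall>a\<in>A. \<forall>a'\<in>A. \<forall>b\<in>B. \<not> lt b a \<and> \<not> lt a' b \<longrightarrow> b \<in> A)"

definition proper_convex_subgroup :: "('a::ab_group_add \<Rightarrow> 'a \<Rightarrow> bool) \<Rightarrow> 'a set \<Rightarrow> 'a set \<Rightarrow> bool" where
  "proper_convex_subgroup lt A B \<longleftrightarrow>
     add_subgroup A \<and> add_subgroup B \<and> convex_in lt A B \<and> A \<noteq> B"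

definition anti_lex_product :: "('a::ab_group_add \<Rightarrow> 'a \<Rightarrow> bool) \<Rightarrow> 'a set \<Rightarrow> 'a set \<Rightarrow> 'a set \<Rightarrow> bool" where
  "anti_lex_product lt A B C \<longleftrightarrow>
     add_subgroup A \<and> add_subgroup B \<and> C = {a + b | a b. a \<in> A \<and> b \<in> B} \<and>
     A \<inter> B = {0} \<and> convex_in lt A C"

definition above :: "('a \<Rightarrow> 'a \<Rightarrow> bool) \<Rightarrow> 'a set \<Rightarrow> 'a set \<Rightarrow> 'a set" where
  "above lt H A = {h \<in> H. \<forall>a\<in>A. lt a h}"

definition prelog_section :: "('g::linordered_ab_group_add \<Rightarrow> ('g \<Rightarrow> 'k::linordered_field)) \<Rightarrow> bool" where
  "prelog_section l \<longleftrightarrow>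
     (\<forall>g. l g \<in> ser (<) {x. 0 < x}) \<and>
     (\<forall>a b. l (a + b) = l a + l b) \<and>
     (\<forall>a b. a < b \<longrightarrow> sless (<) (l a) (l b))"

text \<open>The symbol e(alpha), alpha in k((G^{>0})), is represented by
  alpha itself; G^# is the set below with group operation + and order sless (<);
  g in G is identified with e(l g) = l g.\<close>
definition Gsharp :: "('g::linordered_ab_group_add \<Rightarrow> 'k::linordered_field) set" where
  "Gsharp = ser (<) {x. 0 < x}"

text \<open>Embedding k((G)) into k((G^#)): the monomial g goes to the monomial e(l g).\<close>
definition emb :: "('g \<Rightarrow> ('g \<Rightarrow> 'k::zero)) \<Rightarrow> ('g \<Rightarrow> 'k) \<Rightarrow> (('g \<Rightarrow> 'k) \<Rightarrow> 'k)" where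
  "emb l \<alpha> = (\<lambda>\<beta>. if \<beta> \<in> range l then \<alpha> (the_inv l \<beta>) else 0)"

text \<open>Log on G^# (= l^#): Log(e(alpha)) = alpha, viewed as an element of k((G^#)).\<close>
definition Log_sharp :: "('g \<Rightarrow> ('g \<Rightarrow> 'k::zero)) \<Rightarrow> ('g \<Rightarrow> 'k) \<Rightarrow> (('g \<Rightarrow> 'k) \<Rightarrow> 'k)" where
  "Log_sharp l x = emb l x"

definition Exp_sharp :: "('g \<Rightarrow> 'k) \<Rightarrow> ('g \<Rightarrow> 'k)" where
  "Exp_sharp f = f"

definition Hsharp :: "('g::linordered_ab_group_add \<Rightarrow> ('g \<Rightarrow> 'k::linordered_field)) \<Rightarrow> 'g set \<Rightarrow> 'g set \<Rightarrow> ('g \<Rightarrow> 'k) set" where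
  "Hsharp l H U = {l h + Exp_sharp f | h f. h \<in> H \<and> f \<in> ser (<) (above (<) H U)}"

end

theory Submission
  imports Defs
begin

(* Write S = H^{>U}.  The group H^{#,U} is the set of sums l h + f with h in H and f in k((S)),
   so it is the sum of the two subgroups l(H) and k((S)).  Everything follows from one
   consequence of the hypothesis (dagger): a nonzero f in k((S)) lies strictly above all of
   l(H) if f > 0 and strictly below all of l(H) if f < 0.  Hence l(H) meets k((S)) only in 0
   (directness), l(H) is convex in the sum, and l(H) is proper because k((S)) contains the
   monomial of some h0 in S.  For the last claim, dagger applied to that monomial shows that
   every support element of every l h is at most h0; so every support element of every
   h' in H^{#,U} is bounded by an element of H, and Log h' (whose support is l(supp h'))
   lies entirely below the leading monomial of any nonzero f supported above l(H). *)

section \<open>Supports\<close>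

lemma supp_uminus [simp]: "supp (- f) = supp (f :: 'a \<Rightarrow> 'k::group_add)"
  by (simp add: supp_def)

lemma supp_add: "supp (f + g) \<subseteq> supp f \<union> supp (g :: 'a \<Rightarrow> 'k::monoid_add)"
  by (auto simp: supp_def)

lemma supp_diff: "supp (f - g) \<subseteq> supp f \<union> supp (g :: 'a \<Rightarrow> 'k::group_add)"
  by (auto simp: supp_def)

lemma supp_eq_empty_iff: "supp f = {} \<longleftrightarrow> f = (0 :: 'a \<Rightarrow> 'k::zero)"
  by (auto simp: supp_def fun_eq_iff)

lemma anti_wo_subset:
  assumes S: "anti_wo lt S" and "T \<subseteq> S"
  shows "anti_wo lt T"
  unfolding anti_wo_def
proof (intro allI impI)
  fix X assume "X \<subseteq> T" "X \<noteq> {}"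
  moreover from this(1) have "X \<subseteq> S" using \<open>T \<subseteq> S\<close> by (rule subset_trans)
  ultimately show "\<exists>m\<in>X. \<forall>x\<in>X. \<not> lt m x" using S unfolding anti_wo_def by simp
qed

lemma anti_wo_linorder_iff:
  "anti_wo (<) S \<longleftrightarrow> (\<forall>T\<subseteq>S. T \<noteq> {} \<longrightarrow> (\<exists>m\<in>T. \<forall>x\<in>T. x \<le> m))"
  for S :: "'a::linorder set"
  unfolding anti_wo_def by (simp add: not_less)

lemma anti_wo_Un:
  fixes S T :: "'a::linorder set"
  assumes S: "anti_wo (<) S" and T: "anti_wo (<) T"
  shows "anti_wo (<) (S \<union> T)"
  unfolding anti_wo_linorder_iff
proof (intro allI impI)
  fix X assume X: "X \<subseteq> S \<union> T" "X \<noteq> {}"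
  have has_max: "\<exists>m\<in>X \<inter> A. \<forall>x\<in>X \<inter> A. x \<le> m" if A: "anti_wo (<) A" and "X \<inter> A \<noteq> {}" for A
    using A[unfolded anti_wo_linorder_iff, rule_format, of "X \<inter> A"] that(2) by blast
  consider "X \<inter> S = {}" | "X \<inter> T = {}" | "X \<inter> S \<noteq> {}" "X \<inter> T \<noteq> {}" by blast
  then show "\<exists>m\<in>X. \<forall>x\<in>X. x \<le> m"
  proof cases
    case 1
    then have "X \<inter> T = X" using X(1) by blast
    then show ?thesis using has_max[OF T] X(2) by simp
  next
    case 2
    then have "X \<inter> S = X" using X(1) by blast
    then show ?thesis using has_max[OF S] X(2) by simp
  next
    case 3
    obtain ms where ms: "ms \<in> X" "\<forall>x\<in>X \<inter> S. x \<le> ms" using has_max[OF S 3(1)] by blast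
    obtain mt where mt: "mt \<in> X" "\<forall>x\<in>X \<inter> T. x \<le> mt" using has_max[OF T 3(2)] by blast
    have "x \<le> max ms mt" if "x \<in> X" for x
    proof -
      have "x \<le> ms \<or> x \<le> mt" using that X(1) ms(2) mt(2) by blast
      then show ?thesis by (simp add: le_max_iff_disj)
    qed
    moreover have "max ms mt \<in> X" using ms(1) mt(1) by (cases "ms \<le> mt") (simp_all add: max_def)
    ultimately show ?thesis by blast
  qed
qed

abbreviation anti_wo_supp :: "('g::linorder \<Rightarrow> 'k::zero) \<Rightarrow> bool" where
  "anti_wo_supp f \<equiv> anti_wo (<) (supp f)"

lemma anti_wo_supp_add:
  "anti_wo_supp f \<Longrightarrow> anti_wo_supp g \<Longrightarrow> anti_wo_supp (f + (g :: 'g::linorder \<Rightarrow> 'k::monoid_add))"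
  by (rule anti_wo_subset[OF anti_wo_Un supp_add])

lemma anti_wo_supp_diff:
  "anti_wo_supp f \<Longrightarrow> anti_wo_supp g \<Longrightarrow> anti_wo_supp (f - (g :: 'g::linorder \<Rightarrow> 'k::group_add))"
  by (rule anti_wo_subset[OF anti_wo_Un supp_diff])

lemma add_subgroup_ser: "add_subgroup (ser (<) S :: ('g::linorder \<Rightarrow> 'k::ab_group_add) set)"
  unfolding add_subgroup_def
proof (intro conjI ballI)
  show "0 \<in> ser (<) S" by (simp add: ser_def supp_def anti_wo_def)
  fix f g :: "'g \<Rightarrow> 'k" assume f: "f \<in> ser (<) S" and g: "g \<in> ser (<) S"
  then have "anti_wo_supp (f + g)" by (simp add: ser_def anti_wo_supp_add)
  moreover have "supp (f + g) \<subseteq> S" using f g supp_add[of f g] by (auto simp: ser_def)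
  ultimately show "f + g \<in> ser (<) S" by (simp add: ser_def)
  show "- f \<in> ser (<) S" using f by (simp add: ser_def)
qed

lemma val_eqI:
  assumes total: "\<And>x y. x \<in> supp f \<Longrightarrow> y \<in> supp f \<Longrightarrow> x = y \<or> lt x y \<or> lt y x"
    and m: "m \<in> supp f" "\<forall>x\<in>supp f. \<not> lt m x"
  shows "val lt f = m"
  unfolding val_def
proof (rule the_equality)
  show "m \<in> supp f \<and> (\<forall>x\<in>supp f. \<not> lt m x)" using m by blast
  fix m' assume "m' \<in> supp f \<and> (\<forall>x\<in>supp f. \<not> lt m' x)"
  then show "m' = m" using total m by blast
qed

lemma val_linorder_eqI:
  fixes f :: "'g::linorder \<Rightarrow> 'k::zero"
  assumes "m \<in> supp f" "\<forall>x\<in>supp f. x \<le> m"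
  shows "val (<) f = m"
  using assms by (intro val_eqI) (auto simp: not_less)

lemma val_uminus: "val lt (- f) = val lt (f :: 'a \<Rightarrow> 'k::group_add)"
  by (simp add: val_def)

lemma val_max:
  fixes f :: "'g::linorder \<Rightarrow> 'k::zero"
  assumes "anti_wo_supp f" "f \<noteq> 0"
  shows "val (<) f \<in> supp f" "\<forall>x\<in>supp f. x \<le> val (<) f"
proof -
  obtain m where m: "m \<in> supp f" "\<forall>x\<in>supp f. \<not> m < x"
    using assms supp_eq_empty_iff[of f] unfolding anti_wo_def by blast
  then have "val (<) f = m" by (intro val_linorder_eqI) (auto simp: not_less)
  then show "val (<) f \<in> supp f" "\<forall>x\<in>supp f. x \<le> val (<) f"
    using m by (auto simp: not_less)
qed

section \<open>Sign and order of series\<close>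

lemma spos_zero: "\<not> spos lt (0 :: 'a \<Rightarrow> 'k::linordered_field)"
  by (simp add: spos_def)

lemma spos_uminus_asym: "spos lt (f :: 'a \<Rightarrow> 'k::linordered_field) \<Longrightarrow> \<not> spos lt (- f)"
  by (auto simp: spos_def val_uminus)

lemma sless_irrefl: "\<not> sless lt f (f :: 'a \<Rightarrow> 'k::linordered_field)"
  by (simp add: sless_def spos_zero)

lemma sless_asym: "sless lt a (b :: 'a \<Rightarrow> 'k::linordered_field) \<Longrightarrow> \<not> sless lt b a"
  unfolding sless_def using spos_uminus_asym[of lt "b - a"] by simp

lemma sless_add_iff: "sless lt (a + c) (b + c) \<longleftrightarrow> sless lt a (b :: 'a \<Rightarrow> 'k::linordered_field)"
  by (simp add: sless_def)

lemma sless_uminus_iff: "sless lt (- a) (- b) \<longleftrightarrow> sless lt b (a :: 'a \<Rightarrow> 'k::linordered_field)"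
  by (simp add: sless_def)

lemma sabs_pos: "spos lt f \<Longrightarrow> sabs lt f = (f :: 'a \<Rightarrow> 'k::linordered_field)"
  by (simp add: sabs_def spos_uminus_asym)

lemma sabs_neg: "spos lt (- f) \<Longrightarrow> sabs lt f = - (f :: 'a \<Rightarrow> 'k::linordered_field)"
  by (simp add: sabs_def)

lemma sabs_at_val_pos:
  assumes "val lt f \<in> supp (f :: 'a \<Rightarrow> 'k::linordered_field)"
  shows "0 < sabs lt f (val lt f)"
proof (cases "spos lt (- f)")
  case True
  then show ?thesis by (simp add: sabs_neg spos_def val_uminus)
next
  case False
  have "supp f \<noteq> {}" and "f (val lt f) \<noteq> 0" using assms by (auto simp: supp_def)
  moreover have "\<not> f (val lt f) < 0" using False \<open>supp f \<noteq> {}\<close> by (simp add: spos_def val_uminus)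
  ultimately have "0 < f (val lt f)" by simp
  then show ?thesis using False by (simp add: sabs_def)
qed

lemma spos_cases:
  fixes d :: "'g::linorder \<Rightarrow> 'k::linordered_field"
  assumes "anti_wo_supp d" "d \<noteq> 0"
  shows "spos (<) d \<or> spos (<) (- d)"
proof -
  have ne: "supp d \<noteq> {}" using assms(2) supp_eq_empty_iff[of d] by simp
  have lead: "d (val (<) d) \<noteq> 0" using val_max(1)[OF assms] by (simp add: supp_def)
  show ?thesis
  proof (cases "0 < d (val (<) d)")
    case True
    then show ?thesis using ne by (simp add: spos_def)
  next
    case False
    then have "0 < (- d) (val (<) (- d))" using lead by (simp add: val_uminus)
    then show ?thesis using ne by (simp add: spos_def)
  qed
qed

lemma spos_add:
  fixes a b :: "'g::linorder \<Rightarrow> 'k::linordered_field"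
  assumes "anti_wo_supp a" "anti_wo_supp b" "spos (<) a" "spos (<) b"
  shows "spos (<) (a + b)"
proof -
  define va vb where "va = val (<) a" and "vb = val (<) b"
  have a: "\<forall>x\<in>supp a. x \<le> va" "0 < a va" and b: "\<forall>x\<in>supp b. x \<le> vb" "0 < b vb"
    using assms val_max[of a] val_max[of b] unfolding va_def vb_def spos_def supp_eq_empty_iff
    by auto
  have a_above: "a y = 0" if "va < y" for y using a(1) that by (auto simp: supp_def not_le[symmetric])
  have b_above: "b y = 0" if "vb < y" for y using b(1) that by (auto simp: supp_def not_le[symmetric])
  define m where "m = max va vb"
  have pos: "0 < a m + b m"
  proof (cases va vb rule: linorder_cases)
    case less
    then have "m = vb" "a vb = 0" using a_above by (simp_all add: m_def)
    then show ?thesis using b(2) by simp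
  next
    case equal
    then show ?thesis using a(2) b(2) by (simp add: m_def)
  next
    case greater
    then have "m = va" "b va = 0" using b_above by (simp_all add: m_def)
    then show ?thesis using a(2) by simp
  qed
  have "x \<le> m" if "x \<in> supp (a + b)" for x
  proof -
    have "x \<in> supp a \<or> x \<in> supp b" using that supp_add[of a b] by blast
    then have "x \<le> va \<or> x \<le> vb" using a(1) b(1) by blast
    then show ?thesis by (simp add: m_def le_max_iff_disj)
  qed
  then have "\<forall>x\<in>supp (a + b). x \<le> m" by blast
  moreover have "m \<in> supp (a + b)" using pos by (simp add: supp_def)
  ultimately have "val (<) (a + b) = m" by (rule val_linorder_eqI[rotated])
  then show ?thesis using pos \<open>m \<in> supp (a + b)\<close> by (auto simp: spos_def)
qed

lemma sless_trans:
  fixes a b c :: "'g::linorder \<Rightarrow> 'k::linordered_field"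
  assumes "anti_wo_supp a" "anti_wo_supp b" "anti_wo_supp c" "sless (<) a b" "sless (<) b c"
  shows "sless (<) a c"
proof -
  have "spos (<) ((c - b) + (b - a))"
    using assms by (intro spos_add anti_wo_supp_diff) (simp_all add: sless_def)
  then show ?thesis by (simp add: sless_def)
qed

lemma sless_trichotomy:
  fixes a b :: "'g::linorder \<Rightarrow> 'k::linordered_field"
  assumes "anti_wo_supp a" "anti_wo_supp b"
  shows "a = b \<or> sless (<) a b \<or> sless (<) b a"
  using spos_cases[OF anti_wo_supp_diff[OF assms(2,1)]] by (auto simp: sless_def)

text \<open>This is the mechanism behind the last claim of lemma8, applied
  over the index set G^#.\<close>
lemma sless_sabs_below_leading:
  fixes f L :: "'a \<Rightarrow> 'k::linordered_field"
  assumes asym: "\<And>x y. lt x y \<Longrightarrow> \<not> lt y x"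
    and total: "\<And>x y. x \<in> X \<Longrightarrow> y \<in> X \<Longrightarrow> x = y \<or> lt x y \<or> lt y x"
    and supps: "supp f \<union> supp L \<subseteq> X"
    and lead: "\<beta> \<in> supp f" "\<forall>x\<in>supp f. \<not> lt \<beta> x"
    and below: "\<forall>y\<in>supp L. lt y \<beta>"
  shows "sless lt L (sabs lt f)"
proof -
  define D where "D = sabs lt f - L"
  have val_f: "val lt f = \<beta>"
  proof (rule val_eqI)
    show "\<And>x y. x \<in> supp f \<Longrightarrow> y \<in> supp f \<Longrightarrow> x = y \<or> lt x y \<or> lt y x"
      using total supps by blast
  qed (use lead in blast)+
  have L_at: "L \<beta> = 0" using below asym[of \<beta> \<beta>] by (auto simp: supp_def)
  have supp_sabs: "supp (sabs lt f) = supp f" by (simp add: sabs_def)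
  have D_at: "0 < D \<beta>" using sabs_at_val_pos[of lt f] lead(1) L_at by (simp add: D_def val_f)
  then have in_D: "\<beta> \<in> supp D" by (simp add: supp_def)
  have supp_D: "supp D \<subseteq> supp f \<union> supp L" using supp_diff[of "sabs lt f" L] supp_sabs
    by (simp add: D_def)
  have val_D: "val lt D = \<beta>"
  proof (rule val_eqI)
    show "\<And>x y. x \<in> supp D \<Longrightarrow> y \<in> supp D \<Longrightarrow> x = y \<or> lt x y \<or> lt y x"
      using total supps supp_D by blast
    show "\<forall>y\<in>supp D. \<not> lt \<beta> y" using supp_D lead(2) below asym by blast
  qed (rule in_D)
  have "spos lt D" unfolding spos_def using in_D D_at val_D by auto
  then show ?thesis by (simp add: sless_def D_def)
qed

definition monomial :: "'i \<Rightarrow> ('i \<Rightarrow> 'k::zero_neq_one)" where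
  "monomial m = (\<lambda>x. if x = m then 1 else 0)"

lemma supp_monomial [simp]: "supp (monomial m :: 'i \<Rightarrow> 'k::zero_neq_one) = {m}"
  by (auto simp: supp_def monomial_def)

lemma monomial_nonzero: "monomial m \<noteq> (0 :: 'i \<Rightarrow> 'k::zero_neq_one)"
  by (auto simp: monomial_def fun_eq_iff)

lemma monomial_in_ser: "m \<in> S \<Longrightarrow> (monomial m :: 'g::linorder \<Rightarrow> 'k::zero_neq_one) \<in> ser (<) S"
  by (auto simp: ser_def anti_wo_def subset_singleton_iff)

lemma val_monomial: "val (<) (monomial m :: 'g::linorder \<Rightarrow> 'k::zero_neq_one) = m"
  by (rule val_linorder_eqI) simp_all

lemma spos_monomial: "spos (<) (monomial m :: 'g::linorder \<Rightarrow> 'k::linordered_field)"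
  by (simp add: spos_def val_monomial) (simp add: monomial_def)

text \<open>A series bounded in absolute value by the monomial m has its support below m: otherwise
  its leading coefficient would decide the sign of both m - a and m + a.\<close>
lemma supp_le_of_abs_below_monomial:
  fixes a :: "'g::linorder \<Rightarrow> 'k::linordered_field"
  assumes aw: "anti_wo_supp a"
    and upper: "sless (<) a (monomial m)" and lower: "sless (<) (- a) (monomial m)"
    and x: "x \<in> supp a"
  shows "x \<le> m"
proof (rule ccontr)
  assume "\<not> x \<le> m"
  then have a_nz: "a \<noteq> 0" and "m < x" using x by (auto simp: supp_def)
  define v where "v = val (<) a"
  have v: "v \<in> supp a" "\<forall>y\<in>supp a. y \<le> v" using val_max[OF aw a_nz] unfolding v_def by auto
  with \<open>m < x\<close> x have "m < v" by (meson less_le_trans)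
  then have mono_v: "(monomial m :: 'g \<Rightarrow> 'k) v = 0" by (simp add: monomial_def)
  have bound: "y \<le> v" if "y \<in> supp (monomial m) \<union> supp a" for y
    using that v(2) \<open>m < v\<close> by auto
  have "val (<) (monomial m - a) = v"
  proof (rule val_linorder_eqI)
    show "v \<in> supp (monomial m - a)" using v(1) mono_v by (simp add: supp_def)
    show "\<forall>y\<in>supp (monomial m - a). y \<le> v" using bound supp_diff[of "monomial m" a] by blast
  qed
  then have "0 < (monomial m - a) v" using upper by (simp add: sless_def spos_def)
  moreover have "val (<) (monomial m + a) = v"
  proof (rule val_linorder_eqI)
    show "v \<in> supp (monomial m + a)" using v(1) mono_v by (simp add: supp_def)
    show "\<forall>y\<in>supp (monomial m + a). y \<le> v" using bound supp_add[of "monomial m" a] by blast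
  qed
  then have "0 < (monomial m + a) v" using lower by (simp add: sless_def spos_def)
  ultimately show False using mono_v by simp
qed

lemma prelog_additive: "prelog_section l \<Longrightarrow> l (a + b) = l a + l b"
  by (simp add: prelog_section_def)

lemma prelog_mono: "prelog_section l \<Longrightarrow> a < b \<Longrightarrow> sless (<) (l a) (l b)"
  by (simp add: prelog_section_def)

lemma prelog_anti_wo_supp: "prelog_section l \<Longrightarrow> anti_wo_supp (l g)"
  by (simp add: prelog_section_def ser_def)

lemma prelog_zero: "prelog_section l \<Longrightarrow> l 0 = 0"
  using prelog_additive[of l 0 0] by simp

lemma prelog_uminus: "prelog_section l \<Longrightarrow> l (- a) = - l a"
  using minus_unique[of "l a" "l (- a)"] prelog_additive[of l a "- a"] prelog_zero[of l] by simp

lemma prelog_diff: "prelog_section l \<Longrightarrow> l (a - b) = l a - l b"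
  using prelog_additive[of l a "- b"] prelog_uminus[of l b] by simp

lemma prelog_inj:
  assumes "prelog_section l"
  shows "inj l"
proof (rule injI)
  fix a b assume eq: "l a = l b"
  show "a = b"
  proof (rule ccontr)
    assume "a \<noteq> b"
    then consider "a < b" | "b < a" by (rule linorder_neqE)
    then show False
    proof cases
      case 1
      then show False using prelog_mono[OF assms 1] eq by (simp add: sless_irrefl)
    next
      case 2
      then show False using prelog_mono[OF assms 2] eq by (simp add: sless_irrefl)
    qed
  qed
qed

lemma supp_Log_sharp: "inj l \<Longrightarrow> supp (Log_sharp l h) = l ` supp h"
  by (auto simp: supp_def Log_sharp_def emb_def the_inv_f_f inj_eq)

lemma add_subgroup_uminus: "add_subgroup A \<Longrightarrow> a \<in> A \<Longrightarrow> - a \<in> A"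
  unfolding add_subgroup_def by blast

lemma add_subgroup_diff:
  assumes "add_subgroup A" "a \<in> A" "b \<in> A"
  shows "a - b \<in> (A :: 'a::ab_group_add set)"
proof -
  have "a + - b \<in> A" using assms add_subgroup_uminus[OF assms(1,3)] unfolding add_subgroup_def by blast
  then show ?thesis by simp
qed

lemma add_subgroup_image:
  assumes A: "add_subgroup A" and hom: "\<And>a b. f (a + b) = f a + f b"
  shows "add_subgroup (f ` (A :: 'a::ab_group_add set) :: 'b::ab_group_add set)"
proof -
  have f0: "f 0 = 0" using hom[of 0 0] by simp
  have neg: "f (- a) = - f a" for a using minus_unique[of "f a" "f (- a)"] hom[of a "- a"] f0 by simp
  show ?thesis unfolding add_subgroup_def
  proof (intro conjI ballI)
    have "0 \<in> A" using A by (simp add: add_subgroup_def)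
    then show "0 \<in> f ` A" using f0 by (metis image_eqI)
    fix x y assume "x \<in> f ` A" "y \<in> f ` A"
    then obtain a b where ab: "a \<in> A" "b \<in> A" and xy: "x = f a" "y = f b" by blast
    have "a + b \<in> A" "- a \<in> A" using A ab by (simp_all add: add_subgroup_def)
    moreover have "x + y = f (a + b)" "- x = f (- a)" using xy hom neg by simp_all
    ultimately show "x + y \<in> f ` A" "- x \<in> f ` A" by simp_all
  qed
qed

lemma add_subgroup_sum:
  fixes A B :: "'a::ab_group_add set"
  assumes "add_subgroup A" "add_subgroup B"
  shows "add_subgroup {a + b | a b. a \<in> A \<and> b \<in> B}"
  unfolding add_subgroup_def
proof (intro conjI ballI)
  show "0 \<in> {a + b | a b. a \<in> A \<and> b \<in> B}" using assms by (force simp: add_subgroup_def)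
  fix x y assume "x \<in> {a + b | a b. a \<in> A \<and> b \<in> B}" "y \<in> {a + b | a b. a \<in> A \<and> b \<in> B}"
  then obtain a b a' b' where "x = a + b" "y = a' + b'" "a \<in> A" "a' \<in> A" "b \<in> B" "b' \<in> B"
    by blast
  moreover have "x + y = (a + a') + (b + b')" "- x = - a + - b" using calculation
    by (simp_all add: algebra_simps)
  ultimately show "x + y \<in> {a + b | a b. a \<in> A \<and> b \<in> B}" "- x \<in> {a + b | a b. a \<in> A \<and> b \<in> B}"
    using assms unfolding add_subgroup_def by blast+
qed

lemma above_proper_convex_subgroup_nonempty:
  fixes U H :: "'g::linordered_ab_group_add set"
  assumes "proper_convex_subgroup (<) U H"
  obtains h0 where "h0 \<in> above (<) H U"
proof -
  have U: "add_subgroup U" and H: "add_subgroup H" and conv: "convex_in (<) U H"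
    and "U \<noteq> H" using assms by (simp_all add: proper_convex_subgroup_def)
  moreover have "U \<subseteq> H" using conv by (simp add: convex_in_def)
  ultimately obtain h1 where h1: "h1 \<in> H" "h1 \<notin> U" by blast
  define h0 where "h0 = (if 0 < h1 then h1 else - h1)"
  have h0: "h0 \<in> H" "h0 \<notin> U" using h1 U H by (auto simp: h0_def add_subgroup_def)
  have "\<not> h0 < 0" by (auto simp: h0_def)
  have "u < h0" if u: "u \<in> U" for u
  proof (rule ccontr)
    assume "\<not> u < h0"
    moreover have "0 \<in> U" using U by (simp add: add_subgroup_def)
    ultimately have "h0 \<in> U" using conv u h0(1) \<open>\<not> h0 < 0\<close> unfolding convex_in_def by blast
    with h0(2) show False by blast
  qed
  then show thesis using h0(1) by (intro that[of h0]) (simp add: above_def)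
qed

section \<open>Consequences of the hypothesis (dagger)\<close>

locale dagger_setting =
  fixes l :: "'g::linordered_ab_group_add \<Rightarrow> ('g \<Rightarrow> 'k::linordered_field)"
    and U H :: "'g set"
  assumes prelog: "prelog_section l"
    and UH: "proper_convex_subgroup (<) U H"
    and dagger: "\<forall>h\<in>H. \<forall>f\<in>ser (<) (above (<) H U). f \<noteq> 0 \<longrightarrow> sless (<) (l h) (sabs (<) f)"
begin

abbreviation S :: "'g set" where "S \<equiv> above (<) H U"

abbreviation Hs :: "('g \<Rightarrow> 'k) set" where "Hs \<equiv> Hsharp l H U"

lemma H_subgroup: "add_subgroup H"
  using UH by (simp add: proper_convex_subgroup_def)

lemma S_subset_H: "S \<subseteq> H"
  by (auto simp: above_def)

lemma Hsharp_sum: "Hs = {a + f | a f. a \<in> l ` H \<and> f \<in> ser (<) S}"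
  by (auto simp: Hsharp_def Exp_sharp_def)

lemma lH_subgroup: "add_subgroup (l ` H)"
  using H_subgroup prelog_additive[OF prelog] by (rule add_subgroup_image)

lemma Hsharp_subgroup: "add_subgroup Hs"
  unfolding Hsharp_sum using lH_subgroup add_subgroup_ser by (rule add_subgroup_sum)

lemma lH_subset_Hsharp: "l ` H \<subseteq> Hs"
  unfolding Hsharp_sum using add_subgroup_ser[where S = S, where 'k = 'k]
  by (force simp: add_subgroup_def)

lemma Hsharp_anti_wo_supp: "x \<in> Hs \<Longrightarrow> anti_wo_supp x"
  unfolding Hsharp_sum
  using prelog_anti_wo_supp[OF prelog] by (auto simp: ser_def intro!: anti_wo_supp_add)

lemma dagger_sign:
  assumes f: "f \<in> ser (<) S" "f \<noteq> 0" and h: "h \<in> H"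
  shows "spos (<) f \<Longrightarrow> sless (<) (l h) f" and "spos (<) (- f) \<Longrightarrow> sless (<) f (l h)"
proof -
  have "sless (<) (l h) (sabs (<) f)" using dagger f h by blast
  then show "sless (<) (l h) f" if "spos (<) f" using sabs_pos[OF that] by simp
  have "- h \<in> H" using h by (rule add_subgroup_uminus[OF H_subgroup])
  then show "sless (<) f (l h)" if "spos (<) (- f)"
    using dagger f sabs_neg[OF that] prelog_uminus[OF prelog] sless_uminus_iff by metis
qed

lemma dagger_not_in_lH:
  assumes "f \<in> ser (<) S" "f \<noteq> 0"
  shows "f \<notin> l ` H"
proof
  assume "f \<in> l ` H"
  then obtain h where "h \<in> H" "f = l h" by blast
  moreover have "anti_wo_supp f" using assms by (simp add: ser_def)
  ultimately consider "spos (<) f" | "spos (<) (- f)" using spos_cases assms(2) by blast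
  then show False
    using dagger_sign[OF assms \<open>h \<in> H\<close>] \<open>f = l h\<close> sless_irrefl by cases auto
qed

lemma lH_inter_ser: "l ` H \<inter> ser (<) S = {0}"
  using dagger_not_in_lH prelog_zero[OF prelog] H_subgroup add_subgroup_ser[where S = S]
  by (force simp: add_subgroup_def)

text \<open>l(H) is convex in H^{#,U}: an element l hb + fb with fb \<noteq> 0 lies above all of l(H)
  or below all of l(H), depending on the sign of fb.\<close>
lemma lH_convex: "convex_in (sless (<)) (l ` H) Hs"
  unfolding convex_in_def
proof (intro conjI lH_subset_Hsharp ballI impI)
  fix a a' b assume a: "a \<in> l ` H" and a': "a' \<in> l ` H" and b: "b \<in> Hs"
    and between: "\<not> sless (<) b a \<and> \<not> sless (<) a' b"
  obtain ha where ha: "ha \<in> H" "a = l ha" using a by blast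
  obtain ha' where ha': "ha' \<in> H" "a' = l ha'" using a' by blast
  obtain hb fb where hb: "hb \<in> H" and fb: "fb \<in> ser (<) S" and "b = l hb + fb"
    using b unfolding Hsharp_def Exp_sharp_def by blast
  then have b_eq: "b = fb + l hb" by (simp add: add.commute)
  have diffs: "ha' - hb \<in> H" "ha - hb \<in> H"
    using ha(1) ha'(1) hb add_subgroup_diff[OF H_subgroup] by simp_all
  have shift: "l (ha' - hb) + l hb = a'" "l (ha - hb) + l hb = a"
    using ha(2) ha'(2) prelog_diff[OF prelog] by simp_all
  show "b \<in> l ` H"
  proof (cases "fb = 0")
    case True
    then show ?thesis using b_eq hb by simp
  next
    case False
    have "anti_wo_supp fb" using fb by (simp add: ser_def)
    then consider "spos (<) fb" | "spos (<) (- fb)" using spos_cases False by blast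
    then show ?thesis
    proof cases
      case 1
      then have "sless (<) (l (ha' - hb) + l hb) (fb + l hb)"
        using dagger_sign(1)[OF fb False diffs(1)] by (simp only: sless_add_iff)
      then have "sless (<) a' b" by (simp only: shift b_eq)
      then show ?thesis using between by blast
    next
      case 2
      then have "sless (<) (fb + l hb) (l (ha - hb) + l hb)"
        using dagger_sign(2)[OF fb False diffs(2)] by (simp only: sless_add_iff)
      then have "sless (<) b a" by (simp only: shift b_eq)
      then show ?thesis using between by blast
    qed
  qed
qed

text \<open>l(H) is a proper subgroup: the monomial of an element of S lies in H^{#,U} only.\<close>
lemma lH_ne_Hsharp: "l ` H \<noteq> Hs"
proof -
  obtain h0 where "h0 \<in> S" using above_proper_convex_subgroup_nonempty[OF UH] .
  then have mono: "monomial h0 \<in> ser (<) S" by (rule monomial_in_ser)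
  then have "monomial h0 \<in> Hs"
    using lH_subgroup unfolding Hsharp_sum by (force simp: add_subgroup_def)
  then show ?thesis using dagger_not_in_lH[OF mono monomial_nonzero] by blast
qed

text \<open>All supports of elements of l(H) are bounded by one element h0 of H: apply dagger to
  the monomial of h0 in S and use the monomial bound on supports.\<close>
lemma supp_lH_bounded: "\<exists>h0\<in>H. \<forall>h\<in>H. \<forall>x\<in>supp (l h). x \<le> h0"
proof -
  obtain h0 where h0: "h0 \<in> S" using above_proper_convex_subgroup_nonempty[OF UH] .
  have mono: "monomial h0 \<in> ser (<) S" using h0 by (rule monomial_in_ser)
  have "x \<le> h0" if "h \<in> H" "x \<in> supp (l h)" for h x
  proof (rule supp_le_of_abs_below_monomial[OF prelog_anti_wo_supp[OF prelog] _ _ that(2)])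
    have "- h \<in> H" using that(1) by (rule add_subgroup_uminus[OF H_subgroup])
    then show "sless (<) (l h) (monomial h0)" "sless (<) (- l h) (monomial h0)"
      using dagger_sign(1)[OF mono monomial_nonzero _ spos_monomial] that(1)
        prelog_uminus[OF prelog] by metis+
  qed
  then show ?thesis using h0 S_subset_H by blast
qed

lemma supp_Hsharp_bounded:
  assumes "h' \<in> Hs" "x \<in> supp h'"
  shows "\<exists>c\<in>H. x \<le> c"
proof -
  obtain h f where "h \<in> H" "f \<in> ser (<) S" "h' = l h + f"
    using assms(1) by (auto simp: Hsharp_def Exp_sharp_def)
  then have "x \<in> supp (l h) \<or> x \<in> H"
    using assms(2) supp_add[of "l h" f] S_subset_H by (auto simp: ser_def)
  then show ?thesis using supp_lH_bounded \<open>h \<in> H\<close> by blast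
qed

lemma supp_Log_below:
  assumes h': "h' \<in> Hs" and \<beta>: "\<beta> \<in> above (sless (<)) Hs (l ` H)" and y: "y \<in> supp (Log_sharp l h')"
  shows "sless (<) y \<beta>"
proof -
  obtain x where x: "x \<in> supp h'" "y = l x"
    using y supp_Log_sharp[OF prelog_inj[OF prelog]] by blast
  obtain c where c: "c \<in> H" "x \<le> c" using supp_Hsharp_bounded[OF h' x(1)] by blast
  have c_below: "sless (<) (l c) \<beta>" using \<beta> c(1) by (simp add: above_def)
  have "anti_wo_supp \<beta>" using \<beta> Hsharp_anti_wo_supp by (simp add: above_def)
  show ?thesis
  proof (cases "x = c")
    case True
    then show ?thesis using c_below x(2) by simp
  next
    case False
    then have "sless (<) (l x) (l c)" using c(2) prelog_mono[OF prelog] by simp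
    then show ?thesis using c_below x(2) \<open>anti_wo_supp \<beta>\<close> prelog_anti_wo_supp[OF prelog]
      by (blast intro: sless_trans)
  qed
qed

text \<open>The last claim of lemma8: Log h' < |f| for h' in H^{#,U} and nonzero f supported
  above l(H), since Log h' lies below the leading monomial of f.\<close>
lemma Log_sharp_below_sabs:
  assumes h': "h' \<in> Hs"
    and f: "f \<in> ser (sless (<)) (above (sless (<)) Hs (l ` H))" "f \<noteq> 0"
  shows "sless (sless (<)) (Log_sharp l h') (sabs (sless (<)) f)"
proof -
  have supp_f: "supp f \<subseteq> above (sless (<)) Hs (l ` H)" and aw: "anti_wo (sless (<)) (supp f)"
    using f(1) by (auto simp: ser_def)
  obtain \<beta> where \<beta>: "\<beta> \<in> supp f" "\<forall>x\<in>supp f. \<not> sless (<) \<beta> x"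
    using aw f(2) supp_eq_empty_iff[of f] unfolding anti_wo_def by blast
  show ?thesis
  proof (rule sless_sabs_below_leading[where X = "{x. anti_wo_supp x}" and lt = "sless (<)"])
    show "\<And>x y. sless (<) x y \<Longrightarrow> \<not> sless (<) y x" by (rule sless_asym)
    show "\<And>x y. x \<in> {x. anti_wo_supp x} \<Longrightarrow> y \<in> {x. anti_wo_supp x} \<Longrightarrow>
        x = y \<or> sless (<) x y \<or> sless (<) y x"
      using sless_trichotomy by blast
    show "supp f \<union> supp (Log_sharp l h') \<subseteq> {x. anti_wo_supp x}"
      using supp_f Hsharp_anti_wo_supp prelog_anti_wo_supp[OF prelog]
        supp_Log_sharp[OF prelog_inj[OF prelog]] by (auto simp: above_def)
    show "\<forall>y\<in>supp (Log_sharp l h'). sless (<) y \<beta>"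
      using supp_Log_below[OF h'] \<beta>(1) supp_f by blast
  qed (use \<beta> in blast)+
qed

end

theorem lemma8:
  fixes l :: "'g::linordered_ab_group_add \<Rightarrow> ('g \<Rightarrow> 'k::linordered_field)"
    and U H :: "'g set"
  assumes log_k: "\<exists>lg::'k \<Rightarrow> 'k. bij_betw lg {x. 0 < x} UNIV \<and> strict_mono_on {x. 0 < x} lg \<and>
                     (\<forall>x>0. \<forall>y>0. lg (x * y) = lg x + lg y)"
    and l: "prelog_section l"
    and UH: "proper_convex_subgroup (<) U H"
    and dagger: "\<forall>h\<in>H. \<forall>f\<in>ser (<) (above (<) H U). f \<noteq> 0 \<longrightarrow> sless (<) (l h) (sabs (<) f)"
  shows "proper_convex_subgroup (sless (<)) (l ` H) (Hsharp l H U)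
         \<and> anti_lex_product (sless (<)) (l ` H) (Exp_sharp ` ser (<) (above (<) H U)) (Hsharp l H U)
         \<and> (\<forall>h'\<in>Hsharp l H U. \<forall>f\<in>ser (sless (<)) (above (sless (<)) (Hsharp l H U) (l ` H)).
              f \<noteq> 0 \<longrightarrow> sless (sless (<)) (Log_sharp l h') (sabs (sless (<)) f))"
proof -
  interpret dagger_setting l U H using l UH dagger by unfold_locales
  have Exp_image: "Exp_sharp ` ser (<) S = ser (<) S" by (simp add: Exp_sharp_def)
  have "proper_convex_subgroup (sless (<)) (l ` H) Hs"
    using lH_subgroup Hsharp_subgroup lH_convex lH_ne_Hsharp
    by (simp add: proper_convex_subgroup_def)
  moreover have "anti_lex_product (sless (<)) (l ` H) (Exp_sharp ` ser (<) S) Hs"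
    unfolding anti_lex_product_def Exp_image
    using lH_subgroup add_subgroup_ser Hsharp_sum lH_inter_ser lH_convex by blast
  ultimately show ?thesis using Log_sharp_below_sabs by blast
qed

end
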